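(* Let $b>\tfrac12$ and $m\in\mathbb Z$, and define the functions $f(t)=\vartheta_3(\pi t+2\pi bm,\,ib)$ and $g(t)=\vartheta_3(\pi t,\,ib)$ for $t\in\mathbb R$. Then $$\sup_{t\in\mathbb R}|f(t)-g(t)|\le 8\pi|m|\,(b-\tfrac12)\sum_{k=1}^\infty k\,e^{-\pi bk^2}.$$
   Context: For $z,t\in\mathbb C$ with $\operatorname{Im}t>0$: $\vartheta_3(z,t)=\sum_{n\in\mathbb Z}e^{\pi i t n^2}e^{2izn}$. *)

theory Defs
  imports "HOL-Analysis.Analysis"
begin

definition theta3 :: "complex \<Rightarrow> complex \<Rightarrow> complex" where
  "theta3 z t = (\<Sum>\<^sub>\<infinity>n\<in>(UNIV::int set).
      exp (pi * \<i> * t * of_int n ^ 2) * exp (2 * \<i> * z * of_int n))"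

end

theory Submission
  imports Defs "HOL-Real_Asymp.Real_Asymp"
begin

text \<open>
  Since \<open>exp (2\<pi>imn) = 1\<close>, \<open>\<vartheta>\<^sub>3(\<cdot>, \<tau>)\<close> has period \<open>\<pi>\<close>, so shifting the argument by
  \<open>2\<pi>bm\<close> is the same as shifting it by \<open>y = 2\<pi>(b - 1/2)m\<close>. For real arguments the \<open>n\<close>-th
  terms of the two series differ by the factor \<open>exp (2iyn) - 1\<close>, of modulus at most \<open>2|y||n|\<close>,
  while the \<open>n\<close>-th term itself has modulus \<open>exp (-\<pi>bn\<^sup>2)\<close>. Summing over \<open>n \<in> \<int>\<close> gives the
  bound \<open>2|y| \<Sum>\<^sub>n |n| exp (-\<pi>bn\<^sup>2) = 4|y| \<Sum>\<^sub>k\<^sub>\<ge>\<^sub>1 k exp (-\<pi>bk\<^sup>2)\<close>.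
\<close>

lemma norm_exp_i_minus_1_le: "norm (exp (\<i> * of_real x) - 1) \<le> \<bar>x\<bar>"
proof -
  have "(norm (exp (\<i> * of_real x) - 1))^2 = (cos x - 1)^2 + (sin x)^2"
    by (simp add: exp_eq_polar cis.ctr cmod_def)
  also have "\<dots> = 4 * (sin (x/2))^2"
    using cos_double_sin[of "x/2"] by (simp add: power2_eq_square algebra_simps sin_squared_eq)
  also have "\<dots> \<le> x^2"
    using abs_sin_x_le_abs_x[of "x/2"] abs_le_square_iff[of "sin (x/2)" "x/2"]
    by (simp add: power_divide)
  finally show ?thesis by (metis abs_le_square_iff abs_norm_cancel)
qed

lemma has_sum_diff:
  fixes f g :: "'a \<Rightarrow> 'b::topological_ab_group_add"
  assumes "(f has_sum a) A" and "(g has_sum b) A"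
  shows "((\<lambda>x. f x - g x) has_sum (a - b)) A"
proof -
  have "((\<lambda>x. - g x) has_sum - b) A"
    using assms(2) by (simp add: has_sum_uminus)
  from has_sum_add[OF assms(1) this] show ?thesis
    by simp
qed

lemma has_sum_int_symmetric:
  fixes f :: "int \<Rightarrow> 'a::real_normed_vector"
  assumes even: "\<And>n. f (- n) = f n"
    and pos: "((\<lambda>k. f (int (Suc k))) has_sum s) UNIV"
  shows "(f has_sum (f 0 + 2 *\<^sub>R s)) UNIV"
proof -
  let ?P = "range (\<lambda>k. int (Suc k))" and ?N = "range (\<lambda>k. - int (Suc k))"
  have "(f has_sum s) ?P"
    using pos by (subst has_sum_reindex) (auto simp: inj_def o_def)
  moreover have "inj (\<lambda>k. - int (Suc k))"
    by (auto simp: inj_def)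
  hence "(f has_sum s) ?N"
    using pos by (simp only: has_sum_reindex o_def even)
  ultimately have "(f has_sum (s + s)) (?P \<union> ?N)"
    by (rule has_sum_Un_disjoint) auto
  moreover have "(f has_sum f 0) {0}"
    by (rule has_sum_finiteI) auto
  ultimately have "(f has_sum (s + s + f 0)) (?P \<union> ?N \<union> {0})"
    by (rule has_sum_Un_disjoint) auto
  moreover have "?P \<union> ?N \<union> {0} = UNIV"
  proof -
    have "n \<in> ?P \<union> ?N" if "n \<noteq> 0" for n :: int
    proof (cases "n > 0")
      case True
      hence "n = int (Suc (nat (n - 1)))" by simp
      thus ?thesis by (metis UnI1 rangeI)
    next
      case False
      hence "n = - int (Suc (nat (- n - 1)))" using that by simp
      thus ?thesis by (metis UnI2 rangeI)
    qed
    thus ?thesis by blast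
  qed
  ultimately show ?thesis
    by (simp add: scaleR_2 add.commute)
qed

lemma summable_Gaussian_moment:
  fixes c :: real
  assumes "c > 0"
  shows "summable (\<lambda>k. real (Suc k) * exp (- c * real (Suc k)^2))"
proof (rule summable_comparison_test_bigo)
  show "summable (\<lambda>k. norm (inverse (real k ^ 2)))"
    using inverse_power_summable[of 2, where 'a = real] by simp
  show "(\<lambda>k. real (Suc k) * exp (- c * real (Suc k)^2)) \<in> O(\<lambda>k. inverse (real k ^ 2))"
    using assms by real_asymp
qed

lemma has_sum_abs_times_Gaussian:
  fixes c :: real
  assumes "c > 0"
  shows "((\<lambda>n::int. \<bar>of_int n\<bar> * exp (- c * of_int n ^ 2)) has_sum
           2 * (\<Sum>k. real (Suc k) * exp (- c * real (Suc k)^2))) UNIV"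
  using has_sum_int_symmetric[where f = "\<lambda>n. \<bar>of_int n\<bar> * exp (- c * of_int n ^ 2)"]
    sums_nonneg_imp_has_sum[OF summable_sums[OF summable_Gaussian_moment[OF assms]]]
  by simp

lemma summable_on_Gaussian:
  fixes c :: real
  assumes "c > 0"
  shows "(\<lambda>n::int. exp (- c * of_int n ^ 2)) summable_on UNIV"
proof -
  have "summable (\<lambda>k. exp (- c * real (Suc k)^2))"
    by (rule summable_comparison_test[OF _ summable_Gaussian_moment[OF assms]]) auto
  hence "((\<lambda>k. exp (- c * real (Suc k)^2)) has_sum (\<Sum>k. exp (- c * real (Suc k)^2))) UNIV"
    by (intro sums_nonneg_imp_has_sum summable_sums) auto
  thus ?thesis
    using has_sum_int_symmetric[where f = "\<lambda>n. exp (- c * of_int n ^ 2)"]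
    by (auto dest: has_sum_imp_summable)
qed

definition theta3_term :: "complex \<Rightarrow> complex \<Rightarrow> int \<Rightarrow> complex" where
  "theta3_term z t n = exp (pi * \<i> * t * of_int n ^ 2) * exp (2 * \<i> * z * of_int n)"

lemma theta3_eq_infsum_theta3_term: "theta3 z t = (\<Sum>\<^sub>\<infinity>n. theta3_term z t n)"
  unfolding theta3_def theta3_term_def ..

lemma theta3_term_add:
  "theta3_term (z + w) t n = theta3_term z t n * exp (2 * \<i> * w * of_int n)"
  unfolding theta3_term_def distrib_left distrib_right exp_add by (simp only: mult.assoc)

lemma norm_theta3_term_of_real:
  "norm (theta3_term (of_real x) t n) = exp (- pi * Im t * of_int n ^ 2)"
  by (simp add: theta3_term_def norm_mult)

lemma theta3_term_of_real_summable:
  assumes "Im t > 0"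
  shows "theta3_term (of_real x) t summable_on UNIV"
proof (rule abs_summable_summable)
  have "(\<lambda>n::int. exp (- (pi * Im t) * of_int n ^ 2)) summable_on UNIV"
    using assms by (intro summable_on_Gaussian) simp
  thus "(\<lambda>n. norm (theta3_term (of_real x) t n)) summable_on UNIV"
    unfolding norm_theta3_term_of_real minus_mult_left .
qed

lemma theta3_add_pi_int:
  fixes z t :: complex
  shows "theta3 (z + of_real pi * of_int k) t = theta3 z t"
proof -
  have "theta3_term (z + of_real pi * of_int k) t n = theta3_term z t n" for n
  proof -
    have "2 * \<i> * (of_real pi * of_int k) * of_int n = \<i> * (of_int (k * n) * (of_real pi * 2))"
      by simp
    hence "exp (2 * \<i> * (of_real pi * of_int k) * of_int n) = 1"
      by (simp only: exp_2pi_1_int)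
    thus ?thesis by (simp only: theta3_term_add mult_1_right)
  qed
  thus ?thesis by (simp add: theta3_eq_infsum_theta3_term)
qed

lemma norm_theta3_diff_le:
  assumes "Im t > 0"
  shows "norm (theta3 (of_real (x + y)) t - theta3 (of_real x) t)
           \<le> 4 * \<bar>y\<bar> * (\<Sum>k. real (Suc k) * exp (- pi * Im t * real (Suc k)^2))"
proof -
  define d where "d n = theta3_term (of_real (x + y)) t n - theta3_term (of_real x) t n" for n
  define h where "h n = \<bar>of_int n\<bar> * exp (- pi * Im t * of_int n ^ 2)" for n :: int
  have h_sum: "(h has_sum 2 * (\<Sum>k. real (Suc k) * exp (- pi * Im t * real (Suc k)^2))) UNIV"
    unfolding h_def using has_sum_abs_times_Gaussian[of "pi * Im t"] assms by simp
  have d_le: "norm (d n) \<le> 2 * \<bar>y\<bar> * h n" for n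
  proof -
    have d_eq: "d n = theta3_term (of_real x) t n * (exp (\<i> * of_real (2 * y * of_int n)) - 1)"
      by (simp add: d_def theta3_term_add right_diff_distrib mult_ac)
    have "norm (d n) \<le> exp (- pi * Im t * of_int n ^ 2) * \<bar>2 * y * of_int n\<bar>"
      unfolding d_eq norm_mult norm_theta3_term_of_real
      by (intro mult_left_mono norm_exp_i_minus_1_le) auto
    thus ?thesis by (simp add: h_def abs_mult mult_ac)
  qed
  have bound_summable: "(\<lambda>n. 2 * \<bar>y\<bar> * h n) summable_on UNIV"
    using h_sum by (intro summable_on_cmult_right has_sum_imp_summable)
  have d_abs_summable: "(\<lambda>n. norm (d n)) summable_on UNIV"
    using bound_summable d_le by (rule Infinite_Sum.abs_summable_on_comparison_test')
  have "(d has_sum (theta3 (of_real (x + y)) t - theta3 (of_real x) t)) UNIV"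
    unfolding d_def theta3_eq_infsum_theta3_term
    by (intro has_sum_diff has_sum_infsum theta3_term_of_real_summable assms)
  hence "norm (theta3 (of_real (x + y)) t - theta3 (of_real x) t) = norm (infsum d UNIV)"
    by (simp add: infsumI)
  also have "\<dots> \<le> infsum (\<lambda>n. norm (d n)) UNIV"
    by (rule norm_infsum_bound[OF d_abs_summable])
  also have "\<dots> \<le> infsum (\<lambda>n. 2 * \<bar>y\<bar> * h n) UNIV"
    using d_abs_summable bound_summable d_le by (rule infsum_mono)
  also have "\<dots> = 4 * \<bar>y\<bar> * (\<Sum>k. real (Suc k) * exp (- pi * Im t * real (Suc k)^2))"
    using has_sum_cmult_right[OF h_sum, of "2 * \<bar>y\<bar>"] by (simp add: infsumI)
  finally show ?thesis .
qed

theorem lemma6p1: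
  fixes b :: real and m :: int
  assumes "b > 1/2"
  shows "(SUP t\<in>(UNIV::real set).
            ereal (norm (theta3 (of_real (pi * t + 2 * pi * b * of_int m)) (\<i> * of_real b)
                       - theta3 (of_real (pi * t)) (\<i> * of_real b))))
         \<le> ereal (8 * pi * \<bar>of_int m\<bar> * (b - 1/2) *
                   (\<Sum>k. real (Suc k) * exp (- pi * b * (real (Suc k))^2)))"
proof (rule SUP_least)
  fix t :: real
  define y where "y = 2 * pi * (b - 1/2) * of_int m"
  have "of_real (pi * t + 2 * pi * b * of_int m) = of_real (pi * t + y) + of_real pi * (of_int m :: complex)"
    by (simp add: y_def algebra_simps)
  hence "theta3 (of_real (pi * t + 2 * pi * b * of_int m)) (\<i> * of_real b)
           = theta3 (of_real (pi * t + y)) (\<i> * of_real b)"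
    by (simp only: theta3_add_pi_int)
  moreover have "4 * \<bar>y\<bar> = 8 * pi * \<bar>of_int m\<bar> * (b - 1/2)"
    using assms by (simp add: y_def abs_mult)
  ultimately show "ereal (norm (theta3 (of_real (pi * t + 2 * pi * b * of_int m)) (\<i> * of_real b)
                       - theta3 (of_real (pi * t)) (\<i> * of_real b)))
         \<le> ereal (8 * pi * \<bar>of_int m\<bar> * (b - 1/2) *
                   (\<Sum>k. real (Suc k) * exp (- pi * b * (real (Suc k))^2)))"
    using norm_theta3_diff_le[of "\<i> * of_real b" "pi * t" y] assms by simp
qed

end
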